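(* Let $\Phi:\ell^\infty(\mathbb Z)\to\ell^\infty(\mathbb Z)$ be a linear map commuting with the backward shift $B$, $(Bv)_n=v_{n+1}$. If $\Phi$ is weak*-continuous and idempotent ($\Phi\circ\Phi=\Phi$), then $\Phi$ is either the identity map or $0$.
   Context: The weak*-topology on $\ell^\infty(\mathbb Z)$ is the one coming from $\ell^\infty(\mathbb Z)=\ell^1(\mathbb Z)^*$. *)

theory Defs
  imports "HOL-Analysis.Analysis"
begin

definition ell_inf :: "(int \<Rightarrow> complex) set" where
  "ell_inf = {v. bounded (range v)}"

definition ell_one :: "(int \<Rightarrow> complex) set" where
  "ell_one = {a. (\<lambda>n. norm (a n)) summable_on UNIV}"

definition dual_pair :: "(int \<Rightarrow> complex) \<Rightarrow> (int \<Rightarrow> complex) \<Rightarrow> complex" where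
  "dual_pair a v = (\<Sum>\<^sub>\<infinity>n. a n * v n)"

text \<open>The weak-star topology on l-infinity(Z) coming from l-infinity = (l-1)^*:
  the coarsest topology on l-infinity making all v |-> sum a_n v_n (a in l-1) continuous.\<close>
definition weak_star_topology :: "(int \<Rightarrow> complex) topology" where
  "weak_star_topology = topology_generated_by
     {{v \<in> ell_inf. dual_pair a v \<in> U} | a U. a \<in> ell_one \<and> open U}"

definition backward_shift :: "(int \<Rightarrow> complex) \<Rightarrow> (int \<Rightarrow> complex)" where
  "backward_shift v = (\<lambda>n. v (n + 1))"

end

theory Submission
  imports Defs
begin

text \<open>Commuting with the shift makes every character \<open>n \<mapsto> e\<^sup>i\<^sup>n\<^sup>\<theta>\<close> an eigenvector of
  \<open>\<Phi>\<close>, with eigenvalue \<open>c(\<theta>) \<in> {0, 1}\<close> by idempotence. Bounded pointwise convergence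
  implies weak* convergence (dominated convergence against \<open>\<ell>\<^sup>1\<close>), so \<open>c\<close> is continuous,
  hence constant. Then \<open>{v. \<Phi> v = c v}\<close> is a linear subspace closed under bounded
  pointwise limits that contains all characters. Averaging characters over the \<open>M\<close>-th roots
  of unity gives the indicators of residue classes mod \<open>M\<close>, letting \<open>M \<rightarrow> \<infinity>\<close> gives the
  unit vectors, and every bounded sequence is the bounded pointwise limit of its truncations.
  So \<open>\<Phi> = c \<cdot> id\<close>.\<close>

lemma ell_inf_iff_norm_bounded: "v \<in> ell_inf \<longleftrightarrow> (\<exists>B. \<forall>n. norm (v n) \<le> B)"
  unfolding ell_inf_def bounded_iff by auto

lemma ell_inf_add:
  assumes "v \<in> ell_inf" "w \<in> ell_inf"
  shows "(\<lambda>n. v n + w n) \<in> ell_inf"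
proof -
  obtain A B where "\<And>n. norm (v n) \<le> A" "\<And>n. norm (w n) \<le> B"
    using assms by (auto simp: ell_inf_iff_norm_bounded)
  then have "norm (v n + w n) \<le> A + B" for n
    by (meson add_mono norm_triangle_ineq order_trans)
  then show ?thesis
    by (auto simp: ell_inf_iff_norm_bounded)
qed

lemma ell_inf_scale:
  assumes "v \<in> ell_inf"
  shows "(\<lambda>n. c * v n) \<in> ell_inf"
proof -
  obtain A where "\<And>n. norm (v n) \<le> A"
    using assms by (auto simp: ell_inf_iff_norm_bounded)
  then have "norm (c * v n) \<le> norm c * A" for n
    by (simp add: norm_mult mult_left_mono)
  then show ?thesis
    by (auto simp: ell_inf_iff_norm_bounded)
qed

lemma topspace_weak_star_topology: "topspace weak_star_topology = ell_inf"
proof -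
  have "(\<lambda>n. 0) \<in> ell_one"
    by (simp add: ell_one_def)
  then show ?thesis
    unfolding weak_star_topology_def topology_generated_by_topspace by blast
qed

lemma unit_vector_in_ell_one: "(\<lambda>n. if n = m then 1 else 0 :: complex) \<in> ell_one"
proof -
  have "(\<lambda>n. norm (if n = m then 1 else 0 :: complex)) summable_on {m}"
    by simp
  then show ?thesis
    unfolding ell_one_def by (subst (asm) summable_on_cong_neutral[where T = UNIV]) auto
qed

lemma dual_pair_unit_vector: "dual_pair (\<lambda>n. if n = m then 1 else 0) v = v m"
proof -
  have "dual_pair (\<lambda>n. if n = m then 1 else 0) v = (\<Sum>\<^sub>\<infinity>n\<in>{m}. v n)"
    unfolding dual_pair_def by (rule infsum_cong_neutral) auto
  then show ?thesis
    by simp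
qed

lemma dual_pair_eq_lebesgue_integral:
  assumes "integrable (count_space UNIV) (\<lambda>n. a n * v n)"
  shows "dual_pair a v = (\<integral>n. a n * v n \<partial>count_space UNIV)"
  using assms infsetsum_infsum[of "\<lambda>n. a n * v n" UNIV]
  unfolding dual_pair_def Infinite_Set_Sum.abs_summable_on_def infsetsum_def by simp

lemma tendsto_dual_pair_bounded_pointwise:
  assumes a: "a \<in> ell_one" and bound: "\<And>k n. norm (s k n) \<le> B"
    and pointwise: "\<And>n. (\<lambda>k. s k n) \<longlonglongrightarrow> v n"
  shows "(\<lambda>k. dual_pair a (s k)) \<longlonglongrightarrow> dual_pair a v"
proof -
  have "integrable (count_space UNIV) a"
    using a abs_summable_equivalent[of a UNIV]
    unfolding ell_one_def Infinite_Set_Sum.abs_summable_on_def by simp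
  then have dominant: "integrable (count_space UNIV) (\<lambda>n. B * norm (a n))"
    by (intro integrable_mult_right integrable_norm)
  have lim: "AE n in count_space UNIV. (\<lambda>k. a n * s k n) \<longlonglongrightarrow> a n * v n"
    by (intro AE_I2 tendsto_mult tendsto_const pointwise)
  have dominated: "AE n in count_space UNIV. norm (a n * s k n) \<le> B * norm (a n)" for k
    using bound[of k] by (intro AE_I2) (simp add: norm_mult mult.commute[of "norm (a _)"] mult_right_mono)
  note DC = integrable_dominated_convergence[OF _ _ dominant lim dominated]
    integrable_dominated_convergence2[OF _ _ dominant lim dominated]
    integral_dominated_convergence[OF _ _ dominant lim dominated]
  show ?thesis
    using DC by (simp add: dual_pair_eq_lebesgue_integral)
qed

lemma limitin_weak_star_bounded_pointwise:
  assumes s: "\<And>k. s k \<in> ell_inf" and v: "v \<in> ell_inf"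
    and bound: "\<And>k n. norm (s k n) \<le> B" and pointwise: "\<And>n. (\<lambda>k. s k n) \<longlonglongrightarrow> v n"
  shows "limitin weak_star_topology s v sequentially"
  unfolding limitin_def topspace_weak_star_topology
proof (intro conjI allI impI v)
  fix U
  assume "openin weak_star_topology U \<and> v \<in> U"
  then have "generate_topology_on {{v \<in> ell_inf. dual_pair a v \<in> W} | a W. a \<in> ell_one \<and> open W} U"
    and "v \<in> U"
    unfolding weak_star_topology_def openin_topology_generated_by_iff by auto
  then show "\<forall>\<^sub>F k in sequentially. s k \<in> U"
  proof (induction rule: generate_topology_on.induct)
    case (Int U V)
    then show ?case
      by (auto intro: eventually_conj)
  next
    case (UN K)
    then obtain U where "U \<in> K" "v \<in> U" "\<forall>\<^sub>F k in sequentially. s k \<in> U"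
      by blast
    then show ?case
      by (auto elim: eventually_mono)
  next
    case (Basis U)
    then obtain a W where U: "U = {v \<in> ell_inf. dual_pair a v \<in> W}"
      and "a \<in> ell_one" "open W"
      by auto
    then have "\<forall>\<^sub>F k in sequentially. dual_pair a (s k) \<in> W"
      using tendsto_dual_pair_bounded_pointwise[OF _ bound pointwise] Basis.prems
      by (auto simp: tendsto_def)
    then show ?case
      unfolding U using s by (auto elim: eventually_mono)
  qed simp
qed

lemma limitin_weak_star_imp_tendsto_coordinate:
  assumes "limitin weak_star_topology w u F"
  shows "((\<lambda>k. w k n) \<longlongrightarrow> u n) F"
proof (rule topological_tendstoI)
  fix S
  assume S: "open S" "u n \<in> S"
  define U where "U = {v \<in> ell_inf. dual_pair (\<lambda>m. if m = n then 1 else 0) v \<in> S}"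
  have "openin weak_star_topology U"
    unfolding weak_star_topology_def U_def
    by (rule topology_generated_by_Basis) (use S unit_vector_in_ell_one in blast)
  moreover have "u \<in> U"
    using assms S unfolding limitin_def topspace_weak_star_topology U_def
    by (simp add: dual_pair_unit_vector)
  ultimately have "\<forall>\<^sub>F k in F. w k \<in> U"
    using assms unfolding limitin_def by blast
  then show "\<forall>\<^sub>F k in F. w k n \<in> S"
    unfolding U_def by (auto simp: dual_pair_unit_vector elim: eventually_mono)
qed

lemma continuous_map_weak_star_bounded_pointwise:
  assumes "continuous_map weak_star_topology weak_star_topology \<Phi>"
    and "\<And>k. s k \<in> ell_inf" "v \<in> ell_inf"
    and "\<And>k n. norm (s k n) \<le> B" "\<And>n. (\<lambda>k. s k n) \<longlonglongrightarrow> v n"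
  shows "(\<lambda>k. \<Phi> (s k) n) \<longlonglongrightarrow> \<Phi> v n"
proof -
  have "limitin weak_star_topology (\<Phi> \<circ> s) (\<Phi> v) sequentially"
    using assms(1) limitin_weak_star_bounded_pointwise[OF assms(2-)] by (rule continuous_map_limit)
  from limitin_weak_star_imp_tendsto_coordinate[OF this] show ?thesis
    by (simp add: o_def)
qed

definition character :: "real \<Rightarrow> int \<Rightarrow> complex" where
  "character \<theta> n = cis (of_int n * \<theta>)"

lemma character_in_ell_inf: "character \<theta> \<in> ell_inf"
  unfolding ell_inf_iff_norm_bounded character_def by (intro exI[of _ 1]) simp

lemma character_eq_power_int: "character \<theta> n = cis \<theta> powi n"
  by (simp add: character_def cis_power_int)

lemma backward_shift_character: "backward_shift (character \<theta>) = (\<lambda>n. cis \<theta> * character \<theta> n)"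
  by (simp add: backward_shift_def character_def cis_mult distrib_right add.commute)

lemma backward_shift_eigenvector:
  fixes w :: "int \<Rightarrow> complex"
  assumes eigen: "backward_shift w = (\<lambda>n. z * w n)" and "z \<noteq> 0"
  shows "w n = w 0 * z powi n"
proof (induction n rule: int_induct[where k = 0])
  case (step1 i)
  have "w (i + 1) = z * w i"
    using fun_cong[OF eigen, of i] by (simp add: backward_shift_def)
  with step1 \<open>z \<noteq> 0\<close> show ?case
    by (simp add: power_int_add_1)
next
  case (step2 i)
  have "w i = z * w (i - 1)"
    using fun_cong[OF eigen, of "i - 1"] by (simp add: backward_shift_def)
  with step2 \<open>z \<noteq> 0\<close> show ?case
    by (simp add: power_int_diff field_simps)
qed simp

lemma character_eigenvector:
  assumes homogeneous: "\<And>c v. v \<in> ell_inf \<Longrightarrow> \<Phi> (\<lambda>n. c * v n) = (\<lambda>n. c * \<Phi> v n)"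
    and commutes: "\<And>v. v \<in> ell_inf \<Longrightarrow> \<Phi> (backward_shift v) = backward_shift (\<Phi> v)"
  shows "\<Phi> (character \<theta>) = (\<lambda>n. \<Phi> (character \<theta>) 0 * character \<theta> n)"
proof -
  have "backward_shift (\<Phi> (character \<theta>)) = (\<lambda>n. cis \<theta> * \<Phi> (character \<theta>) n)"
    using commutes[OF character_in_ell_inf, of \<theta>] homogeneous[OF character_in_ell_inf, of _ \<theta>]
    unfolding backward_shift_character by simp
  then have "\<Phi> (character \<theta>) n = \<Phi> (character \<theta>) 0 * cis \<theta> powi n" for n
    by (rule backward_shift_eigenvector) simp
  then show ?thesis
    unfolding character_eq_power_int by (rule ext)
qed

lemma sum_roots_of_unity_power:
  assumes "M > 0"
  shows "(\<Sum>j<M. cis (2 * pi * real j * of_int m / real M)) = (if int M dvd m then of_nat M else 0)"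
proof (cases "int M dvd m")
  case True
  then obtain t where "m = int M * t"
    by blast
  then have "2 * pi * real j * of_int m / real M = 2 * pi * of_int (int j * t)" for j
    using assms by (simp add: field_simps)
  then show ?thesis
    using True by simp
next
  case False
  define \<omega> where "\<omega> = cis (2 * pi * of_int m / real M)"
  have power: "\<omega> ^ j = cis (2 * pi * real j * of_int m / real M)" for j
    unfolding \<omega>_def by (subst Complex.DeMoivre) (simp add: mult_ac)
  have "\<omega> \<noteq> 1"
  proof
    assume "\<omega> = 1"
    then obtain k :: int where "2 * pi * of_int m / real M = of_int k * (2 * pi)"
      by (auto simp: \<omega>_def complex_eq_iff cos_one_2pi_int)
    then have "real_of_int m = real_of_int (k * int M)"
      using assms by (simp add: field_simps)
    with False show False
      by (simp only: of_int_eq_iff) simp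
  qed
  moreover have "\<omega> ^ M = 1"
  proof -
    have "2 * pi * real M * of_int m / real M = 2 * pi * of_int m"
      using assms by simp
    then show ?thesis
      unfolding power by simp
  qed
  ultimately have "(\<Sum>j<M. \<omega> ^ j) = 0"
    by (simp add: geometric_sum)
  then show ?thesis
    using False by (simp add: power)
qed

lemma residue_class_indicator_eq_sum_characters:
  assumes "M > 0"
  shows "(if int M dvd (n - m) then 1 else 0) =
    (\<Sum>j<M. cis (- (2 * pi * real j * of_int m / real M)) / of_nat M * character (2 * pi * real j / real M) n)"
proof -
  have "cis (- (2 * pi * real j * of_int m / real M)) / of_nat M * character (2 * pi * real j / real M) n
      = cis (2 * pi * real j * of_int (n - m) / real M) / of_nat M" for j
  proof -
    have arg: "of_int n * (2 * pi * real j / real M) + - (2 * pi * real j * of_int m / real M)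
        = 2 * pi * real j * of_int (n - m) / real M"
      using assms by (simp add: field_simps)
    have "cis (- (2 * pi * real j * of_int m / real M)) / of_nat M * character (2 * pi * real j / real M) n
        = cis (of_int n * (2 * pi * real j / real M)) * cis (- (2 * pi * real j * of_int m / real M)) / of_nat M"
      by (simp add: character_def)
    also have "\<dots> = cis (2 * pi * real j * of_int (n - m) / real M) / of_nat M"
      by (simp only: cis_mult arg)
    finally show ?thesis .
  qed
  then have "(\<Sum>j<M. cis (- (2 * pi * real j * of_int m / real M)) / of_nat M * character (2 * pi * real j / real M) n)
      = (\<Sum>j<M. cis (2 * pi * real j * of_int (n - m) / real M)) / of_nat M"
    by (simp only: sum_divide_distrib)
  then show ?thesis
    unfolding sum_roots_of_unity_power[OF assms] using assms by simp
qed

lemma tendsto_residue_class_indicator_unit_vector: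
  "(\<lambda>k. if int (Suc k) dvd (n - m) then 1 else 0) \<longlonglongrightarrow> (if n = m then 1 else 0 :: complex)"
proof (rule tendsto_eventually)
  have "\<not> int (Suc k) dvd (n - m)" if "n \<noteq> m" "k \<ge> nat \<bar>n - m\<bar>" for k
    using that dvd_imp_le_int[of "n - m" "int (Suc k)"] by auto
  then show "\<forall>\<^sub>F k in sequentially. (if int (Suc k) dvd (n - m) then 1 else 0) = (if n = m then 1 else 0 :: complex)"
    unfolding eventually_sequentially by (cases "n = m") auto
qed

lemma truncation_eq_sum_unit_vectors:
  fixes v :: "int \<Rightarrow> complex"
  shows "(if \<bar>n\<bar> \<le> int N then v n else 0) = (\<Sum>m\<in>{- int N..int N}. v m * (if n = m then 1 else 0))"
proof -
  have "(\<Sum>m\<in>{- int N..int N}. v m * (if n = m then 1 else 0))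
      = (\<Sum>m\<in>{- int N..int N}. if n = m then v m else 0)"
    by (rule sum.cong) auto
  then show ?thesis
    by auto
qed

lemma bounded_pointwise_closed_subspace_eq_ell_inf:
  assumes subset: "L \<subseteq> ell_inf"
    and character: "\<And>\<theta>. character \<theta> \<in> L"
    and scale: "\<And>c v. v \<in> L \<Longrightarrow> (\<lambda>n. c * v n) \<in> L"
    and add: "\<And>v w. v \<in> L \<Longrightarrow> w \<in> L \<Longrightarrow> (\<lambda>n. v n + w n) \<in> L"
    and limit: "\<And>s v B. (\<And>k. s k \<in> L) \<Longrightarrow> v \<in> ell_inf \<Longrightarrow> (\<And>k n. norm (s k n) \<le> B) \<Longrightarrow>
      (\<And>n. (\<lambda>k. s k n) \<longlonglongrightarrow> v n) \<Longrightarrow> v \<in> L"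
  shows "L = ell_inf"
proof -
  have sum: "(\<lambda>n. \<Sum>j\<in>J. f j n) \<in> L" if "finite J" "\<And>j. j \<in> J \<Longrightarrow> f j \<in> L"
    for J and f :: "'a \<Rightarrow> int \<Rightarrow> complex"
    using that
  proof (induction J rule: finite_induct)
    case empty
    show ?case
      using scale[OF character, of 0 0] by simp
  next
    case (insert j J)
    then show ?case
      using add[of "f j" "\<lambda>n. \<Sum>j\<in>J. f j n"] by simp
  qed
  have residue_class: "(\<lambda>n. if int M dvd (n - m) then 1 else 0) \<in> L" if "M > 0" for M m
    unfolding residue_class_indicator_eq_sum_characters[OF that]
    by (intro sum finite_lessThan scale character)
  have unit_vector: "(\<lambda>n. if n = m then 1 else 0) \<in> L" for m
  proof (rule limit[of "\<lambda>k n. if int (Suc k) dvd (n - m) then 1 else 0" _ 1])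
    show "(\<lambda>n. if int (Suc k) dvd (n - m) then 1 else 0) \<in> L" for k
      by (rule residue_class) simp
    show "(\<lambda>k. if int (Suc k) dvd (n - m) then 1 else 0) \<longlonglongrightarrow> (if n = m then 1 else 0 :: complex)" for n
      by (rule tendsto_residue_class_indicator_unit_vector)
  qed (auto simp: ell_inf_iff_norm_bounded)
  have truncation: "(\<lambda>n. if \<bar>n\<bar> \<le> int N then v n else 0) \<in> L" for v N
    unfolding truncation_eq_sum_unit_vectors by (intro sum finite_atLeastAtMost_int scale unit_vector)
  have "v \<in> L" if v: "v \<in> ell_inf" for v
  proof -
    obtain B where B: "\<And>n. norm (v n) \<le> B"
      using v by (auto simp: ell_inf_iff_norm_bounded)
    then have "0 \<le> B"
      using norm_ge_zero order_trans by blast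
    have "(\<lambda>k. if \<bar>n\<bar> \<le> int k then v n else 0) \<longlonglongrightarrow> v n" for n
      by (intro tendsto_eventually eventually_sequentiallyI[of "nat \<bar>n\<bar>"]) auto
    with B \<open>0 \<le> B\<close> show ?thesis
      by (intro limit[of "\<lambda>k n. if \<bar>n\<bar> \<le> int k then v n else 0" v B] truncation v) auto
  qed
  with subset show ?thesis
    by blast
qed

lemma continuous_on_weak_star_image_character:
  assumes "continuous_map weak_star_topology weak_star_topology \<Phi>"
  shows "continuous_on UNIV (\<lambda>\<theta>. \<Phi> (character \<theta>) n)"
proof (rule continuous_on_sequentiallyI)
  fix u :: "nat \<Rightarrow> real" and \<theta>
  assume "u \<longlonglongrightarrow> \<theta>"
  then have pointwise: "(\<lambda>k. character (u k) m) \<longlonglongrightarrow> character \<theta> m" for m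
    unfolding character_def by (intro tendsto_intros)
  have bound: "norm (character (u k) m) \<le> 1" for k m
    by (simp add: character_def)
  show "(\<lambda>k. \<Phi> (character (u k)) n) \<longlonglongrightarrow> \<Phi> (character \<theta>) n"
    by (rule continuous_map_weak_star_bounded_pointwise[where s = "\<lambda>k. character (u k)",
          OF assms character_in_ell_inf character_in_ell_inf bound pointwise])
qed

lemma weak_star_continuous_linear_scalar_on_characters:
  fixes \<Phi> :: "(int \<Rightarrow> complex) \<Rightarrow> (int \<Rightarrow> complex)"
  assumes additive: "\<And>v w. v \<in> ell_inf \<Longrightarrow> w \<in> ell_inf \<Longrightarrow> \<Phi> (\<lambda>n. v n + w n) = (\<lambda>n. \<Phi> v n + \<Phi> w n)"
    and homogeneous: "\<And>c v. v \<in> ell_inf \<Longrightarrow> \<Phi> (\<lambda>n. c * v n) = (\<lambda>n. c * \<Phi> v n)"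
    and weak_star_cont: "continuous_map weak_star_topology weak_star_topology \<Phi>"
    and characters: "\<And>\<theta>. \<Phi> (character \<theta>) = (\<lambda>n. c * character \<theta> n)"
    and v: "v \<in> ell_inf"
  shows "\<Phi> v = (\<lambda>n. c * v n)"
proof -
  define L where "L = {v \<in> ell_inf. \<Phi> v = (\<lambda>n. c * v n)}"
  have "L = ell_inf"
  proof (rule bounded_pointwise_closed_subspace_eq_ell_inf)
    show "character \<theta> \<in> L" for \<theta>
      unfolding L_def using characters character_in_ell_inf by blast
    show "(\<lambda>n. a * v n) \<in> L" if "v \<in> L" for a v
      using that homogeneous ell_inf_scale unfolding L_def by (auto simp: algebra_simps)
    show "(\<lambda>n. v n + w n) \<in> L" if "v \<in> L" "w \<in> L" for v w
      using that additive ell_inf_add unfolding L_def by (auto simp: algebra_simps)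
    show "v \<in> L" if s: "\<And>k. s k \<in> L" and "v \<in> ell_inf" and "\<And>k n. norm (s k n) \<le> B"
      and pointwise: "\<And>n. (\<lambda>k. s k n) \<longlonglongrightarrow> v n" for s v B
    proof -
      have "\<Phi> v n = c * v n" for n
      proof (rule LIMSEQ_unique)
        show "(\<lambda>k. \<Phi> (s k) n) \<longlonglongrightarrow> \<Phi> v n"
          using s that(2-) unfolding L_def by (intro continuous_map_weak_star_bounded_pointwise[OF weak_star_cont]) auto
        show "(\<lambda>k. \<Phi> (s k) n) \<longlonglongrightarrow> c * v n"
          using s pointwise unfolding L_def by (auto intro: tendsto_mult_left)
      qed
      with \<open>v \<in> ell_inf\<close> show ?thesis
        unfolding L_def by auto
    qed
  qed (auto simp: L_def)
  with v show ?thesis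
    unfolding L_def by auto
qed

theorem proposition2p2:
  fixes \<Phi> :: "(int \<Rightarrow> complex) \<Rightarrow> (int \<Rightarrow> complex)"
  assumes maps: "\<And>v. v \<in> ell_inf \<Longrightarrow> \<Phi> v \<in> ell_inf"
    and additive: "\<And>v w. v \<in> ell_inf \<Longrightarrow> w \<in> ell_inf \<Longrightarrow> \<Phi> (\<lambda>n. v n + w n) = (\<lambda>n. \<Phi> v n + \<Phi> w n)"
    and homogeneous: "\<And>c v. v \<in> ell_inf \<Longrightarrow> \<Phi> (\<lambda>n. c * v n) = (\<lambda>n. c * \<Phi> v n)"
    and commutes: "\<And>v. v \<in> ell_inf \<Longrightarrow> \<Phi> (backward_shift v) = backward_shift (\<Phi> v)"
    and weak_star_cont: "continuous_map weak_star_topology weak_star_topology \<Phi>"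
    and idempotent: "\<And>v. v \<in> ell_inf \<Longrightarrow> \<Phi> (\<Phi> v) = \<Phi> v"
  shows "(\<forall>v \<in> ell_inf. \<Phi> v = v) \<or> (\<forall>v \<in> ell_inf. \<Phi> v = (\<lambda>n. 0))"
proof -
  define c where "c \<theta> = \<Phi> (character \<theta>) 0" for \<theta>
  have eigenvector: "\<Phi> (character \<theta>) = (\<lambda>n. c \<theta> * character \<theta> n)" for \<theta>
    unfolding c_def by (rule character_eigenvector[OF homogeneous commutes])
  have eigenvalue: "c \<theta> = 0 \<or> c \<theta> = 1" for \<theta>
  proof -
    have "\<Phi> (\<lambda>n. c \<theta> * character \<theta> n) = (\<lambda>n. c \<theta> * character \<theta> n)"
      using idempotent[OF character_in_ell_inf, of \<theta>] unfolding eigenvector .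
    then have "(\<lambda>n. c \<theta> * (c \<theta> * character \<theta> n)) = (\<lambda>n. c \<theta> * character \<theta> n)"
      by (simp add: homogeneous[OF character_in_ell_inf] eigenvector)
    from fun_cong[OF this, of 0] show ?thesis
      by (simp add: character_def)
  qed
  have "continuous_on UNIV c"
    unfolding c_def by (rule continuous_on_weak_star_image_character[OF weak_star_cont])
  moreover have "finite (range c)"
    by (rule finite_subset[of _ "{0, 1}"]) (use eigenvalue in auto)
  ultimately have "c constant_on UNIV"
    by (intro continuous_finite_range_constant connected_UNIV)
  then have scalar_on_characters: "\<Phi> (character \<theta>) = (\<lambda>n. c 0 * character \<theta> n)" for \<theta>
    using eigenvector by (metis UNIV_I constant_on_def)
  have scalar: "\<Phi> v = (\<lambda>n. c 0 * v n)" if "v \<in> ell_inf" for v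
    using weak_star_continuous_linear_scalar_on_characters[OF additive homogeneous weak_star_cont
        scalar_on_characters that] .
  show ?thesis
    using eigenvalue[of 0] by (auto simp: scalar)
qed
end
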